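(* Let $Q^\dagger$ be any linear combination of products of the form $\prod_{j\in Y}s_j^\dagger$ (over arbitrary vertex subsets $Y$). For every $k$-local operator $O$, the $(2k+1)$-fold iterated commutator $[\cdots[[O,Q^\dagger],Q^\dagger],\dots,Q^\dagger]$ vanishes. Consequently, if $H$ is a $k$-local operator with $H(Q^\dagger)^q|\overline 0\rangle=0$ for all $q\in\{0,1,\dots,2k\}$, then $H(Q^\dagger)^p|\overline 0\rangle=0$ for all integers $p\ge0$.
   Context: System of $N$ qubits with local basis $|0\rangle,|1\rangle$; $s_i^\dagger$ acts on site $i$ as $s^\dagger|0\rangle=|1\rangle$, $s^\dagger|1\rangle=0$, $s_i=(s_i^\dagger)^\dagger$; $|\overline 0\rangle=|0\rangle^{\otimes N}$. Every operator has a unique expansion in normal-ordered strings $s^\dagger_{j_1}\cdots s^\dagger_{j_n}s_{k_1}\cdots s_{k_m}$ (the $j$'s pairwise distinct, the $k$'s pairwise distinct); an operator is $k$-local if every string with nonzero coefficient in its expansion involves at most $k$ distinct sites. *)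

theory Defs
  imports "HOL-Analysis.Analysis"
begin

text \<open>Sites are the elements of a finite type 'n (so N = CARD('n)).
  The computational basis state |S> is indexed by the set S of sites in state |1>.
  An operator A is a matrix with entries A $ T $ S = <T|A|S>.\<close>

type_synonym 'n qop = "complex ^ ('n set) ^ ('n set)"
type_synonym 'n qstate = "complex ^ ('n set)"

definition sdag :: "'n::finite \<Rightarrow> 'n qop" where
  "sdag i = (\<chi> T S. if i \<notin> S \<and> T = insert i S then 1 else 0)"

definition sann :: "'n::finite \<Rightarrow> 'n qop" where
  "sann i = (\<chi> T S. if i \<in> S \<and> T = S - {i} then 1 else 0)"

text \<open>Normal-ordered string  (prod_{j in J} s_j^dag)(prod_{k in K} s_k), written out
  as a matrix: it annihilates on K (needs K \<subseteq> S), then creates on J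
  (needs J disjoint from S - K).\<close>
definition str :: "'n::finite set \<Rightarrow> 'n set \<Rightarrow> 'n qop" where
  "str J K = (\<chi> T S. if K \<subseteq> S \<and> J \<inter> (S - K) = {} \<and> T = (S - K) \<union> J then 1 else 0)"

definition k_local :: "nat \<Rightarrow> 'n::finite qop \<Rightarrow> bool" where
  "k_local k A \<longleftrightarrow> (\<exists>c :: 'n set \<Rightarrow> 'n set \<Rightarrow> complex.
      A = (\<chi> T S. \<Sum>J\<in>UNIV. \<Sum>K\<in>UNIV. c J K * str J K $ T $ S) \<and>
      (\<forall>J K. c J K \<noteq> 0 \<longrightarrow> card (J \<union> K) \<le> k))"

definition Qdag :: "('n::finite set \<Rightarrow> complex) \<Rightarrow> 'n qop" where
  "Qdag a = (\<chi> T S. \<Sum>Y\<in>UNIV. a Y * str Y {} $ T $ S)"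

definition comm :: "'n::finite qop \<Rightarrow> 'n qop \<Rightarrow> 'n qop" where
  "comm A B = A ** B - B ** A"

definition mpow :: "'n::finite qop \<Rightarrow> nat \<Rightarrow> 'n qop" where
  "mpow A p = (((**) A) ^^ p) (mat 1)"

definition vac :: "'n::finite qstate" where
  "vac = axis {} 1"

end

theory Submission
  imports Defs
begin

text \<open>With \<open>ad Q X = [X, Q]\<close>, \<open>ad Q\<close> is a derivation, so if \<open>ad Q\<close> kills \<open>X\<close> after
  \<open>a + 1\<close> steps and \<open>Y\<close> after \<open>b + 1\<close> steps, it kills \<open>X Y\<close> after \<open>a + b + 1\<close> steps.
  Products of creation operators commute with each other, so one commutator with \<open>Q\<^sup>\<dagger>\<close>
  kills the creation part of a normal-ordered string. Each annihilator \<open>s\<^sub>i\<close> is killed by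
  three: writing \<open>Q\<^sup>\<dagger> = P + s\<^sub>i\<^sup>\<dagger> R\<close> with \<open>P\<close>, \<open>R\<close> not involving site \<open>i\<close> gives
  \<open>[s\<^sub>i, Q\<^sup>\<dagger>] = [s\<^sub>i, s\<^sub>i\<^sup>\<dagger>] R\<close> and \<open>[[s\<^sub>i, s\<^sub>i\<^sup>\<dagger>], s\<^sub>i\<^sup>\<dagger>] = -2 s\<^sub>i\<^sup>\<dagger>\<close>.
  So a string with at most \<open>k\<close> annihilators dies after \<open>2k + 1\<close> commutators.
  For the second claim, \<open>H Q^(p+1) |0\<rangle> = Q H Q^p |0\<rangle> + [H, Q] Q^p |0\<rangle>\<close>, and induction on the
  number of commutators needed to kill \<open>H\<close> propagates the vanishing of \<open>H Q^q |0\<rangle>\<close> from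
  the first values of \<open>q\<close> to all of them.\<close>

lemma matrix_mult_entry:
  "((A :: 'a::semiring_1^'m^'l) ** B) $ i $ j = (\<Sum>k\<in>UNIV. A $ i $ k * B $ k $ j)"
  by (simp add: matrix_matrix_mult_def)

lemma matrix_mult_entry_delta_left:
  assumes "\<And>u. (A :: 'a::semiring_1^'m^'l) $ i $ u = (if P \<and> u = g then 1 else 0)"
  shows "(A ** B) $ i $ j = (if P then B $ g $ j else 0)"
  by (cases P) (simp_all add: matrix_mult_entry assms if_distrib if_distribR cong: if_cong)

lemma matrix_mult_entry_delta_right:
  assumes "\<And>u. (B :: 'a::semiring_1^'m^'l) $ u $ j = (if P \<and> u = g then 1 else 0)"
  shows "(A ** B) $ i $ j = (if P then A $ i $ g else 0)"
  by (cases P) (simp_all add: matrix_mult_entry assms if_distrib if_distribR cong: if_cong)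

lemma mat_mult_entry: "(mat c ** (A :: 'a::semiring_1^'m^'l)) $ i $ j = c * A $ i $ j"
  by (simp add: matrix_mult_entry mat_def if_distrib if_distribR cong: if_cong)

lemma matrix_add_rdistrib: "((A :: 'a::semiring_1^'m^'l) + B) ** C = A ** C + B ** C"
  by (simp add: vec_eq_iff matrix_mult_entry sum.distrib distrib_right)

lemma matrix_diff_ldistrib: "(A :: 'a::ring_1^'m^'l) ** (B - C) = A ** B - A ** C"
  by (simp add: vec_eq_iff matrix_mult_entry sum_subtractf right_diff_distrib)

lemma matrix_diff_rdistrib: "((A :: 'a::ring_1^'m^'l) - B) ** C = A ** C - B ** C"
  by (simp add: vec_eq_iff matrix_mult_entry sum_subtractf left_diff_distrib)

lemma mat_mult_commute: "mat (c :: 'a::comm_ring_1) ** A = A ** mat c"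
  by (simp add: vec_eq_iff matrix_mult_entry mat_def if_distrib if_distribR mult.commute cong: if_cong)

definition ad :: "'a::ring_1^'m^'m \<Rightarrow> 'a^'m^'m \<Rightarrow> 'a^'m^'m" where
  "ad Q X = X ** Q - Q ** X"

lemma comm_eq_ad: "comm X Q = ad Q X"
  by (simp add: comm_def ad_def)

lemma ad_zero [simp]: "ad Q 0 = 0"
  by (simp add: ad_def)

lemma ad_add: "ad Q (X + Y) = ad Q X + ad Q Y"
  by (simp add: ad_def matrix_add_ldistrib matrix_add_rdistrib)

lemma ad_diff: "ad Q (X - Y) = ad Q X - ad Q Y"
  by (simp add: ad_def matrix_diff_ldistrib matrix_diff_rdistrib)

lemma ad_mult: "ad Q (X ** Y) = X ** ad Q Y + ad Q X ** Y"
  by (simp add: ad_def matrix_diff_ldistrib matrix_diff_rdistrib matrix_mul_assoc)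

lemma ad_add_left: "ad (P + Q) X = ad P X + ad Q X"
  by (simp add: ad_def matrix_add_ldistrib matrix_add_rdistrib)

lemma ad_mult_left: "ad (P ** Q) X = P ** ad Q X + ad P X ** Q"
  by (simp add: ad_def matrix_diff_ldistrib matrix_diff_rdistrib matrix_mul_assoc)

lemma ad_eq_0_iff: "ad Q X = 0 \<longleftrightarrow> X ** Q = Q ** X"
  by (simp add: ad_def)

lemma ad_mat [simp]: "ad Q (mat (c :: 'a::comm_ring_1)) = 0"
  by (simp add: ad_def mat_mult_commute)

lemma ad_pow_add: "(ad Q ^^ m) (X + Y) = (ad Q ^^ m) X + (ad Q ^^ m) Y"
  by (induction m) (simp_all add: ad_add)

lemma ad_pow_zero [simp]: "(ad Q ^^ m) 0 = 0"
  by (induction m) simp_all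

lemma ad_pow_sum: "(ad Q ^^ m) (sum f A) = (\<Sum>x\<in>A. (ad Q ^^ m) (f x))"
  by (induction A rule: infinite_finite_induct) (simp_all add: ad_pow_add)

lemma ad_pow_Suc: "(ad Q ^^ Suc m) X = (ad Q ^^ m) (ad Q X)"
  by (simp only: funpow_Suc_right comp_apply)

lemma ad_pow_eq_0_mono:
  assumes "(ad Q ^^ m) X = 0" and "m \<le> n"
  shows "(ad Q ^^ n) X = 0"
proof -
  have "(ad Q ^^ n) X = (ad Q ^^ (n - m)) ((ad Q ^^ m) X)"
    using \<open>m \<le> n\<close> by (metis funpow_add le_add_diff_inverse2 o_apply)
  with assms(1) show ?thesis by simp
qed

lemma ad_pow_mult_eq_0:
  assumes "(ad Q ^^ Suc a) X = 0" and "(ad Q ^^ Suc b) Y = 0"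
  shows "(ad Q ^^ Suc (a + b)) (X ** Y) = 0"
  using assms
proof (induction "a + b" arbitrary: a b X Y)
  case 0
  then show ?case by (simp add: ad_mult)
next
  case (Suc n)
  have left: "(ad Q ^^ (a + b)) (X ** ad Q Y) = 0"
  proof (cases b)
    case 0
    with Suc.prems show ?thesis by simp
  next
    case (Suc b')
    with Suc.prems(2) have "(ad Q ^^ Suc b') (ad Q Y) = 0" by (simp only: ad_pow_Suc)
    with Suc.hyps Suc.prems(1) \<open>b = Suc b'\<close> show ?thesis by simp
  qed
  have right: "(ad Q ^^ (a + b)) (ad Q X ** Y) = 0"
  proof (cases a)
    case 0
    with Suc.prems show ?thesis by simp
  next
    case (Suc a')
    with Suc.prems(1) have "(ad Q ^^ Suc a') (ad Q X) = 0" by (simp only: ad_pow_Suc)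
    with Suc.hyps Suc.prems(2) \<open>a = Suc a'\<close> show ?thesis by simp
  qed
  show ?case by (simp only: ad_pow_Suc ad_mult ad_pow_add left right add_0_right)
qed

text \<open>The annihilator case in the abstract: \<open>s = s\<^sub>i\<close>, \<open>N = s\<^sub>i\<^sup>\<dagger>\<close>, and \<open>Q = P + N R\<close> is
  \<open>Q\<^sup>\<dagger>\<close> split according to whether the created set contains \<open>i\<close>.\<close>

lemma ad_pow_3_eq_0:
  fixes Q s N P R :: "'a::ring_1^'m^'m"
  assumes Q: "Q = P + N ** R"
    and commute: "ad P s = 0" "ad R s = 0" "ad P N = 0" "ad R N = 0"
    and "ad Q N = 0" "ad Q R = 0"
    and "N ** N = 0" "N ** s ** N = N"
  shows "(ad Q ^^ 3) s = 0"
proof -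
  define h where "h = ad N s"
  have ad_split: "ad Q X = ad N X ** R" if "ad P X = 0" "ad R X = 0" for X
    using that by (simp add: Q ad_add_left ad_mult_left)
  have "ad P h = 0" "ad R h = 0"
    using commute unfolding h_def ad_def[of N s] by (simp_all add: ad_diff ad_mult)
  then have ad_h: "ad Q h = ad N h ** R"
    by (rule ad_split)
  have ad_N_h: "ad N h = (0 - N) - (N - 0)"
  proof -
    have "s ** N ** N = 0"
      using \<open>N ** N = 0\<close> by (metis matrix_mul_assoc times0_right)
    then show ?thesis
      using \<open>N ** N = 0\<close> \<open>N ** s ** N = N\<close>
      by (simp add: h_def ad_def matrix_diff_ldistrib matrix_diff_rdistrib matrix_mul_assoc)
  qed
  have "ad Q (ad N h) = 0"
    by (simp only: ad_N_h ad_diff ad_zero \<open>ad Q N = 0\<close>) simp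
  then have "(ad Q ^^ Suc (0 + 0)) (ad N h ** R) = 0"
    using \<open>ad Q R = 0\<close> by (intro ad_pow_mult_eq_0) simp_all
  then have "(ad Q ^^ Suc 1) h = 0"
    by (simp only: ad_pow_Suc ad_h) simp
  then have "(ad Q ^^ Suc (1 + 0)) (h ** R) = 0"
    using \<open>ad Q R = 0\<close> by (intro ad_pow_mult_eq_0) simp_all
  moreover have "ad Q s = h ** R"
    using commute by (simp add: h_def ad_split)
  ultimately show ?thesis
    by (simp add: numeral_3_eq_3 ad_pow_Suc del: funpow.simps)
qed

lemma ad_pow_eq_0_orbit:
  fixes Q X :: "'a::ring_1^'m^'m"
  assumes "(ad Q ^^ m) X = 0"
    and "\<And>p. w (Suc p) = Q *v w p"
    and "\<And>q. q < m \<Longrightarrow> X *v w q = 0"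
  shows "X *v w p = 0"
  using assms(1,3)
proof (induction m arbitrary: X p)
  case 0
  then show ?case by simp
next
  case (Suc m)
  have step: "X *v w (Suc q) = Q *v (X *v w q) + ad Q X *v w q" for q
    by (simp add: assms(2) ad_def matrix_vector_mul_assoc matrix_vector_mult_diff_rdistrib)
  have "ad Q X *v w q = 0" if "q < m" for q
    using step[of q] Suc.prems(2) that by simp
  with Suc.IH Suc.prems(1) have ad_X: "ad Q X *v w q = 0" for q
    by (simp only: ad_pow_Suc)
  show ?case
  proof (induction p)
    case 0
    then show ?case using Suc.prems(2) by simp
  next
    case (Suc p)
    then show ?case using step[of p] ad_X[of p] by simp
  qed
qed

lemma Qdag_entry: "Qdag b $ T $ S = (if S \<subseteq> T then b (T - S) else 0)"
proof -
  have "(Y \<inter> S = {} \<and> T = S \<union> Y) \<longleftrightarrow> (S \<subseteq> T \<and> Y = T - S)" for Y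
    by auto
  then show ?thesis
    by (simp add: Qdag_def str_def if_distrib cong: if_cong)
qed

lemma Qdag_mult_entry:
  "(Qdag b ** Qdag c) $ T $ S = (\<Sum>U | S \<subseteq> U \<and> U \<subseteq> T. b (T - U) * c (U - S))"
proof -
  have "(if U \<subseteq> T then b (T - U) else 0) * (if S \<subseteq> U then c (U - S) else 0)
      = (if S \<subseteq> U \<and> U \<subseteq> T then b (T - U) * c (U - S) else 0)" for U
    by simp
  then show ?thesis
    by (simp add: matrix_mult_entry Qdag_entry sum.inter_filter[symmetric])
qed

lemma Qdag_mult_commute: "Qdag b ** Qdag c = Qdag c ** Qdag b"
proof -
  have "(\<Sum>U | S \<subseteq> U \<and> U \<subseteq> T. b (T - U) * c (U - S))
      = (\<Sum>U | S \<subseteq> U \<and> U \<subseteq> T. c (T - U) * b (U - S))" for S T :: "'a set"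
  proof (rule sum.reindex_bij_witness[where i="\<lambda>U. S \<union> (T - U)" and j="\<lambda>U. S \<union> (T - U)"])
    fix U assume U: "U \<in> {U. S \<subseteq> U \<and> U \<subseteq> T}"
    then have "T - (S \<union> (T - U)) = U - S" and "S \<union> (T - U) - S = T - U"
      by auto
    then show "c (T - (S \<union> (T - U))) * b (S \<union> (T - U) - S) = b (T - U) * c (U - S)"
      by simp
    from U show "S \<union> (T - (S \<union> (T - U))) = U" by auto
  qed auto
  then show ?thesis
    by (simp add: vec_eq_iff Qdag_mult_entry)
qed

lemma ad_Qdag_Qdag: "ad (Qdag a) (Qdag b) = 0"
  by (simp add: ad_eq_0_iff Qdag_mult_commute)

lemma str_creation_eq_Qdag: "str J {} = Qdag (\<lambda>Y. if Y = J then 1 else 0)"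
  by (auto simp: vec_eq_iff str_def Qdag_entry)

lemma sdag_eq_Qdag: "sdag i = Qdag (\<lambda>Y. if Y = {i} then 1 else 0)"
  by (auto simp: vec_eq_iff sdag_def Qdag_entry)

lemma sdag_entry: "sdag i $ T $ S = (if i \<notin> S \<and> T = insert i S then 1 else 0)"
  by (simp add: sdag_def)

lemma sann_entry: "sann i $ T $ S = (if i \<in> S \<and> T = S - {i} then 1 else 0)"
  by (simp add: sann_def)

lemma str_empty: "str {} {} = mat 1"
  by (simp add: vec_eq_iff str_def mat_def)

lemma str_eq_creation_mult_annihilation: "str J K = str J {} ** str {} K"
proof -
  have "str J K $ T $ S = (str J {} ** str {} K) $ T $ S" for T S
    by (subst matrix_mult_entry_delta_right[where P="K \<subseteq> S" and g="S - K"])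
      (auto simp: str_def)
  then show ?thesis
    by (simp add: vec_eq_iff)
qed

lemma str_annihilation_insert:
  assumes "i \<notin> K"
  shows "str {} (insert i K) = sann i ** str {} K"
proof -
  have "str {} (insert i K) $ T $ S = (sann i ** str {} K) $ T $ S" for T S
    by (subst matrix_mult_entry_delta_right[where P="K \<subseteq> S" and g="S - K"])
      (use assms in \<open>auto simp: str_def sann_def\<close>)
  then show ?thesis
    by (simp add: vec_eq_iff)
qed

lemma sdag_mult_sdag: "sdag i ** sdag i = 0"
proof -
  have "(sdag i ** sdag i) $ T $ S = 0" for T S
    by (subst matrix_mult_entry_delta_right[OF sdag_entry]) (simp add: sdag_entry)
  then show ?thesis
    by (simp add: vec_eq_iff)
qed

lemma sdag_sann_sdag: "sdag i ** sann i ** sdag i = sdag i"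
proof -
  have number: "(sdag i ** sann i) $ T $ U = (if i \<in> U \<and> T = U then 1 else 0)" for T U
    by (subst matrix_mult_entry_delta_right[OF sann_entry]) (auto simp: sdag_entry)
  have "(sdag i ** sann i ** sdag i) $ T $ S = sdag i $ T $ S" for T S
    by (subst matrix_mult_entry_delta_right[OF sdag_entry]) (auto simp: number sdag_entry)
  then show ?thesis
    by (simp add: vec_eq_iff)
qed

lemma sann_mult_Qdag_commute:
  assumes "\<And>Y. i \<in> Y \<Longrightarrow> b Y = 0"
  shows "sann i ** Qdag b = Qdag b ** sann i"
proof -
  have "(sann i ** Qdag b) $ T $ S = (Qdag b ** sann i) $ T $ S" for T S
  proof -
    have left: "(sann i ** Qdag b) $ T $ S = (if i \<notin> T then Qdag b $ insert i T $ S else 0)"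
      by (rule matrix_mult_entry_delta_left) (auto simp: sann_entry)
    have right: "(Qdag b ** sann i) $ T $ S = (if i \<in> S then Qdag b $ T $ (S - {i}) else 0)"
      by (rule matrix_mult_entry_delta_right) (simp add: sann_entry)
    have "i \<notin> T \<Longrightarrow> T - (S - {i}) = T - S"
      by auto
    then show ?thesis
      unfolding left right Qdag_entry
      using assms[of "insert i T - S"] assms[of "T - (S - {i})"]
      by (auto simp: insert_Diff_if subset_insert_iff)
  qed
  then show ?thesis
    by (simp add: vec_eq_iff)
qed

lemma Qdag_split_site:
  "Qdag a = Qdag (\<lambda>Y. if i \<in> Y then 0 else a Y)
          + sdag i ** Qdag (\<lambda>Y. if i \<in> Y then 0 else a (insert i Y))"
proof -
  have "Qdag a $ T $ S = (Qdag (\<lambda>Y. if i \<in> Y then 0 else a Y)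
          + sdag i ** Qdag (\<lambda>Y. if i \<in> Y then 0 else a (insert i Y))) $ T $ S" for T S
  proof -
    have created: "(sdag i ** Qdag (\<lambda>Y. if i \<in> Y then 0 else a (insert i Y))) $ T $ S
       = (if i \<in> T then Qdag (\<lambda>Y. if i \<in> Y then 0 else a (insert i Y)) $ (T - {i}) $ S else 0)"
      by (rule matrix_mult_entry_delta_left) (auto simp: sdag_entry)
    have "i \<in> T \<Longrightarrow> i \<notin> S \<Longrightarrow> insert i (T - {i} - S) = T - S"
      by auto
    then show ?thesis
      unfolding vector_add_component created Qdag_entry
      by (auto simp: subset_Diff_insert insert_Diff_if)
  qed
  then show ?thesis
    by (simp add: vec_eq_iff)
qed

lemma ad_Qdag_pow_3_sann: "(ad (Qdag a) ^^ 3) (sann i) = 0"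
proof (rule ad_pow_3_eq_0[OF Qdag_split_site[of a i]])
  show "sdag i ** sdag i = 0" "sdag i ** sann i ** sdag i = sdag i"
    by (rule sdag_mult_sdag sdag_sann_sdag)+
qed (simp_all add: ad_eq_0_iff sann_mult_Qdag_commute sdag_eq_Qdag Qdag_mult_commute)

lemma ad_Qdag_pow_str_annihilation:
  "(ad (Qdag a) ^^ Suc (2 * card K)) (str {} K) = 0"
proof (induction K rule: finite_induct[OF finite])
  case 1
  then show ?case
    by (simp add: str_empty)
next
  case (2 i K)
  have "(ad (Qdag a) ^^ Suc (2 + 2 * card K)) (sann i ** str {} K) = 0"
    using ad_Qdag_pow_3_sann[of a i] "2.IH"
    by (intro ad_pow_mult_eq_0) (simp_all add: numeral_3_eq_3)
  with "2.hyps" show ?case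
    by (simp add: str_annihilation_insert)
qed

lemma ad_Qdag_pow_str: "(ad (Qdag a) ^^ Suc (2 * card K)) (str J K) = 0"
proof -
  have "(ad (Qdag a) ^^ Suc (0 + 2 * card K)) (str J {} ** str {} K) = 0"
    using ad_Qdag_Qdag ad_Qdag_pow_str_annihilation
    by (intro ad_pow_mult_eq_0) (simp_all add: str_creation_eq_Qdag)
  then show ?thesis
    by (simp flip: str_eq_creation_mult_annihilation)
qed

lemma ad_Qdag_pow_k_local:
  assumes "k_local k A"
  shows "(ad (Qdag a) ^^ (2 * k + 1)) A = 0"
proof -
  obtain c where A: "A = (\<chi> T S. \<Sum>J\<in>UNIV. \<Sum>K\<in>UNIV. c J K * str J K $ T $ S)"
    and local: "\<And>J K. c J K \<noteq> 0 \<Longrightarrow> card (J \<union> K) \<le> k"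
    using assms unfolding k_local_def by blast
  have "A = (\<Sum>J\<in>UNIV. \<Sum>K\<in>UNIV. mat (c J K) ** str J K)"
    by (simp add: A vec_eq_iff sum_component mat_mult_entry)
  moreover have "(ad (Qdag a) ^^ (2 * k + 1)) (mat (c J K) ** str J K) = 0" for J K
  proof (cases "c J K = 0")
    case True
    then show ?thesis
      by simp
  next
    case False
    have "card K \<le> card (J \<union> K)"
      by (rule card_mono) auto
    with local[OF False] have "Suc (0 + 2 * card K) \<le> 2 * k + 1"
      by simp
    moreover have "(ad (Qdag a) ^^ Suc (0 + 2 * card K)) (mat (c J K) ** str J K) = 0"
      using ad_Qdag_pow_str by (intro ad_pow_mult_eq_0) simp_all
    ultimately show ?thesis
      by (rule ad_pow_eq_0_mono[rotated])
  qed
  ultimately show ?thesis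
    by (simp only: ad_pow_sum) simp
qed

theorem proposition9:
  fixes a :: "'n::finite set \<Rightarrow> complex" and k :: nat
  shows "(\<forall>Op :: 'n qop. k_local k Op \<longrightarrow> ((\<lambda>X. comm X (Qdag a)) ^^ (2 * k + 1)) Op = 0)
       \<and> (\<forall>H :: 'n qop. k_local k H \<and> (\<forall>q \<le> 2 * k. H *v (mpow (Qdag a) q *v vac) = 0)
            \<longrightarrow> (\<forall>p. H *v (mpow (Qdag a) p *v vac) = 0))"
  unfolding comm_eq_ad
proof (intro conjI allI impI)
  fix Op :: "'n qop"
  assume "k_local k Op"
  then show "(ad (Qdag a) ^^ (2 * k + 1)) Op = 0"
    by (rule ad_Qdag_pow_k_local)
next
  fix H :: "'n qop" and p
  assume H: "k_local k H \<and> (\<forall>q \<le> 2 * k. H *v (mpow (Qdag a) q *v vac) = 0)"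
  show "H *v (mpow (Qdag a) p *v vac) = 0"
    by (rule ad_pow_eq_0_orbit[where w="\<lambda>p. mpow (Qdag a) p *v vac", OF ad_Qdag_pow_k_local])
      (use H in \<open>auto simp: mpow_def matrix_vector_mul_assoc less_Suc_eq_le\<close>)
qed

end
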